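(* Let $C$ be a curve smooth at $O$ and let $f\in\mathbb C(x,y)\setminus\{0\}$ be regular at $O$. Then: (i) the function $s\mapsto v_1(C,s;f)$ is continuous on $[1,+\infty)$, piecewise linear, non-decreasing and concave, and its graph consists of finitely many linear pieces with rational slopes, their number being one more than the number of edges of the Newton polygon $\operatorname{NP}(C,f)$ of slope greater than $-1$; (ii) the points where the derivative of $s\mapsto v_1(C,s;f)$ is not defined are $s_k=-1/\operatorname{sl}(\mathfrak l_k)$, $k=1,\dots,h$; (iii) if the curve $V:\ f=0$ does not contain $C$, then $v_1(C,s;f)=(V,C)_O$ (local intersection multiplicity at $O$) for all $s\gg1$.
   Context: Work over $\mathbb C$, with affine coordinates $x,y$ on $\mathbb A^2\subset\mathbb P^2$ and $O=(0,0)$. $C$ is a curve through $O$, smooth at $O$, with coordinates chosen so that $C$ is tangent to $\{y=0\}$; near $O$ it is parametrized as $x\mapsto(x,\xi(x))$ with $\xi\in\mathbb C[[x]]$, $\xi(0)=\xi'(0)=0$. Every nonzero $f$ has a $C$-expansion $f=\sum a_{ij}x^i(y-\xi(x))^j$, and for real $s\ge1$, $v_1(C,s;f)=\min\{i+sj: a_{ij}\ne0\}$. The Newton polygon $\operatorname{NP}(C,f)$ is the compact part of the boundary of the convex hull of $\bigcup_{a_{ij}\neq0}((i,j)+\mathbb R_{\ge0}^2)$; it is a polygonal chain with vertices $\mathfrak v_0,\dots,\mathfrak v_h$ ordered left to right and edges $\mathfrak l_k=[\mathfrak v_{k-1},\mathfrak v_k]$, $k=1,\dots,h$, with slopes $\operatorname{sl}(\mathfrak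 l_k)$. *)

theory Defs
  imports "HOL-Analysis.Analysis" "HOL-Computational_Algebra.Computational_Algebra"
begin

text \<open>Polynomials in \<open>x,y\<close> are encoded as \<open>complex poly poly\<close>: the outer variable is \<open>y\<close>,
  the coefficients are polynomials in \<open>x\<close>. A rational function \<open>f\<close> regular at \<open>O\<close> is given
  as \<open>f = p / q\<close> with \<open>q(O) \<noteq> 0\<close>. The curve \<open>C\<close> is given near \<open>O\<close> by its branch \<open>y = \<xi>(x)\<close>.\<close>

definition eval_O :: "complex poly poly \<Rightarrow> complex" where
  "eval_O P = poly (poly P 0) 0"

definition restrict_C :: "complex fps \<Rightarrow> complex poly poly \<Rightarrow> complex fps" where
  "restrict_C \<xi> P = poly (map_poly fps_of_poly P) \<xi>"

text \<open>\<open>C\<close> is an algebraic curve through \<open>O\<close>, smooth at \<open>O\<close>, tangent to \<open>y = 0\<close>,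
  with branch \<open>x \<mapsto> (x, \<xi>(x))\<close>.\<close>
definition curve_branch :: "complex fps \<Rightarrow> bool" where
  "curve_branch \<xi> \<longleftrightarrow> fps_nth \<xi> 0 = 0 \<and> fps_nth \<xi> 1 = 0 \<and>
     (\<exists>g :: complex poly poly. g \<noteq> 0 \<and> restrict_C \<xi> g = 0)"

text \<open>\<open>P(x, w + \<xi>(x))\<close> as a double formal power series: outer variable \<open>w = y - \<xi>(x)\<close>,
  inner variable \<open>x\<close>; the coefficient of \<open>x^i w^j\<close> is \<open>(A $ j) $ i\<close>.\<close>
definition C_subst :: "complex fps \<Rightarrow> complex poly poly \<Rightarrow> complex fps fps" where
  "C_subst \<xi> P = poly (map_poly (\<lambda>c. fps_const (fps_of_poly c)) P) (fps_const \<xi> + fps_X)"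

definition C_expansion :: "complex fps \<Rightarrow> complex poly poly \<Rightarrow> complex poly poly \<Rightarrow> complex fps fps" where
  "C_expansion \<xi> p q = (THE A. C_subst \<xi> q * A = C_subst \<xi> p)"

definition C_coeff :: "complex fps \<Rightarrow> complex poly poly \<Rightarrow> complex poly poly \<Rightarrow> nat \<Rightarrow> nat \<Rightarrow> complex" where
  "C_coeff \<xi> p q i j = fps_nth (fps_nth (C_expansion \<xi> p q) j) i"

definition v1 :: "complex fps \<Rightarrow> complex poly poly \<Rightarrow> complex poly poly \<Rightarrow> real \<Rightarrow> real" where
  "v1 \<xi> p q s = Inf {real i + s * real j | i j. C_coeff \<xi> p q i j \<noteq> 0}"

definition newton_polyhedron :: "complex fps \<Rightarrow> complex poly poly \<Rightarrow> complex poly poly \<Rightarrow> (real \<times> real) set" where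
  "newton_polyhedron \<xi> p q = convex hull
     (\<Union>(i, j) \<in> {(i, j). C_coeff \<xi> p q i j \<noteq> 0}. {(real i + u, real j + v) | u v. u \<ge> 0 \<and> v \<ge> 0})"

definition NP_vertices :: "complex fps \<Rightarrow> complex poly poly \<Rightarrow> complex poly poly \<Rightarrow> (real \<times> real) set" where
  "NP_vertices \<xi> p q = {z. z extreme_point_of newton_polyhedron \<xi> p q}"

definition NP_edges :: "complex fps \<Rightarrow> complex poly poly \<Rightarrow> complex poly poly \<Rightarrow> ((real \<times> real) \<times> (real \<times> real)) set" where
  "NP_edges \<xi> p q = {(a, b). a \<in> NP_vertices \<xi> p q \<and> b \<in> NP_vertices \<xi> p q \<and> fst a < fst b \<and>
      \<not> (\<exists>c \<in> NP_vertices \<xi> p q. fst a < fst c \<and> fst c < fst b)}"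

definition edge_slope :: "(real \<times> real) \<times> (real \<times> real) \<Rightarrow> real" where
  "edge_slope e = (snd (snd e) - snd (fst e)) / (fst (snd e) - fst (fst e))"

text \<open>Local intersection multiplicity \<open>(V,C)_O\<close> for \<open>C\<close> smooth at \<open>O\<close>:
  the order in \<open>x\<close> of \<open>f(x, \<xi>(x))\<close>.\<close>
definition int_mult_smooth :: "complex fps \<Rightarrow> complex poly poly \<Rightarrow> complex poly poly \<Rightarrow> nat" where
  "int_mult_smooth \<xi> p q = subdegree (restrict_C \<xi> p / restrict_C \<xi> q)"

end

theory Submission
  imports Defs
begin

text \<open>Each exponent of the \<open>C\<close>-expansion is dominated by one of finitely many minimal ones,
  so \<open>v\<^sub>1(C,s;f) = min (i + s j)\<close> over a finite set of exponents \<open>(i, j)\<close>: it is the lower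
  envelope of finitely many lines with integer slopes \<open>j\<close>. Such an envelope is continuous,
  non-decreasing and concave, and linear between its breakpoints, the values of \<open>s\<close> where two
  lines tie for the minimum; at a breakpoint the slope drops, so the derivative does not exist
  there. The exponents whose line is the unique minimum for some \<open>s > 0\<close> are exactly the
  vertices of the Newton polygon, and consecutive vertices \<open>(i, j)\<close>, \<open>(i', j')\<close> tie at
  \<open>s = (i' - i) / (j - j') = -1 / sl\<close>, so the breakpoints are the numbers \<open>-1 / sl(l\<^sub>k)\<close>.
  Finally the row \<open>j = 0\<close> of the expansion is \<open>f(x, \<xi>(x))\<close>, whose order is \<open>(V, C)\<^sub>O\<close>, and
  this row attains the minimum once \<open>s \<ge> (V, C)\<^sub>O\<close>.\<close>

section \<open>The \<open>C\<close>-expansion\<close>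

lemma C_subst_eq_pcompose:
  "C_subst \<xi> P = fps_of_poly (map_poly fps_of_poly P \<circ>\<^sub>p [:\<xi>, 1:])"
proof (induction P)
  case 0
  then show ?case by (simp add: C_subst_def)
next
  case (pCons c P)
  have "fps_of_poly [:\<xi>, 1:] = fps_const \<xi> + fps_X"
    by (simp add: fps_of_poly_pCons fps_of_poly_const)
  with pCons show ?case
    by (simp add: C_subst_def map_poly_pCons pcompose_pCons fps_of_poly_add fps_of_poly_mult
        fps_of_poly_const)
qed

lemma fps_nth_C_subst_0: "fps_nth (C_subst \<xi> P) 0 = restrict_C \<xi> P"
  by (simp add: C_subst_eq_pcompose restrict_C_def)

lemma C_subst_nonzero:
  assumes "P \<noteq> 0"
  shows "C_subst \<xi> P \<noteq> 0"
proof -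
  have "map_poly fps_of_poly P \<noteq> 0"
    using assms by (subst map_poly_eq_0_iff) (auto simp: fps_of_poly_eq_iff[of _ 0, simplified])
  then have "map_poly fps_of_poly P \<circ>\<^sub>p [:\<xi>, 1:] \<noteq> 0"
    using pcompose_eq_0 by fastforce
  then show ?thesis by (simp add: C_subst_eq_pcompose fps_of_poly_eq_iff[of _ 0, simplified])
qed

lemma fps_nth_restrict_C_0:
  assumes "fps_nth \<xi> 0 = 0"
  shows "fps_nth (restrict_C \<xi> P) 0 = eval_O P"
  by (induction P) (simp_all add: assms restrict_C_def eval_O_def map_poly_pCons poly_0_coeff_0)

lemma C_subst_mult_C_expansion:
  assumes \<xi>0: "fps_nth \<xi> 0 = 0" and reg: "eval_O q \<noteq> 0"
  shows "C_subst \<xi> q * C_expansion \<xi> p q = C_subst \<xi> p"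
proof -
  define Q where "Q = C_subst \<xi> q"
  have unit: "fps_nth (fps_nth Q 0) 0 \<noteq> 0"
    using reg \<xi>0 by (simp add: Q_def fps_nth_C_subst_0 fps_nth_restrict_C_0)
  then have "Q * fps_right_inverse Q (inverse (fps_nth Q 0)) = 1"
    by (intro fps_right_inverse inverse_mult_eq_1') auto
  then have QA: "Q * (fps_right_inverse Q (inverse (fps_nth Q 0)) * C_subst \<xi> p) = C_subst \<xi> p"
    by (simp add: mult.assoc[symmetric])
  have "Q \<noteq> 0" using unit by auto
  then have "\<exists>!A. Q * A = C_subst \<xi> p"
    using QA by (metis mult_cancel_left)
  then show ?thesis
    unfolding C_expansion_def Q_def[symmetric] by (rule theI')
qed

lemma C_expansion_nonzero:
  assumes "fps_nth \<xi> 0 = 0" "eval_O q \<noteq> 0" "p \<noteq> 0"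
  shows "C_expansion \<xi> p q \<noteq> 0"
  using C_subst_mult_C_expansion[OF assms(1,2), of p] C_subst_nonzero[OF assms(3), of \<xi>]
  by (metis mult_zero_right)

lemma restrict_C_mult_C_expansion_0:
  assumes "fps_nth \<xi> 0 = 0" "eval_O q \<noteq> 0"
  shows "restrict_C \<xi> q * fps_nth (C_expansion \<xi> p q) 0 = restrict_C \<xi> p"
  using arg_cong[OF C_subst_mult_C_expansion[OF assms, of p], of "\<lambda>X. fps_nth X 0"]
  by (simp add: fps_nth_C_subst_0)

lemma real_between_finite_sets:
  fixes A B :: "real set"
  assumes "finite A" "finite B" "\<And>a b. a \<in> A \<Longrightarrow> b \<in> B \<Longrightarrow> a < b" "\<And>b. b \<in> B \<Longrightarrow> 0 < b"
  obtains s where "0 < s" "\<And>a. a \<in> A \<Longrightarrow> a < s" "\<And>b. b \<in> B \<Longrightarrow> s < b"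
proof -
  define lo where "lo = Max (insert 0 A)"
  have lo: "0 \<le> lo" "\<And>a. a \<in> A \<Longrightarrow> a \<le> lo"
    using assms(1) unfolding lo_def by auto
  have "lo \<in> insert 0 A"
    using assms(1) unfolding lo_def by (intro Max_in) auto
  show ?thesis
  proof (cases "B = {}")
    case True
    have "a < lo + 1" if "a \<in> A" for a using lo(2)[OF that] by linarith
    with lo True show ?thesis by (intro that[of "lo + 1"]) auto
  next
    case False
    define hi where "hi = Min B"
    have hi: "\<And>b. b \<in> B \<Longrightarrow> hi \<le> b" "hi \<in> B" using assms(2) False by (auto simp: hi_def)
    then have "lo < hi" using \<open>lo \<in> insert 0 A\<close> assms(3,4) by auto
    have "a < (lo + hi) / 2" if "a \<in> A" for a
      using lo(2)[OF that] \<open>lo < hi\<close> by (simp add: field_simps)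
    moreover have "(lo + hi) / 2 < b" if "b \<in> B" for b
      using hi(1)[OF that] \<open>lo < hi\<close> by (simp add: field_simps)
    ultimately show ?thesis using lo \<open>lo < hi\<close> by (intro that[of "(lo + hi) / 2"]) auto
  qed
qed

lemma finite_set_enumeration_above:
  fixes B :: "real set"
  assumes "finite B" "\<And>b. b \<in> B \<Longrightarrow> a < b"
  obtains t where "t 0 = a" "\<And>i j. i < j \<Longrightarrow> j \<le> card B \<Longrightarrow> t i < t j" "t ` {1..card B} = B"
proof -
  define bs where "bs = sorted_list_of_set B"
  have bs: "sorted_wrt (<) bs" "set bs = B" "length bs = card B"
    using assms(1) by (simp_all add: bs_def strict_sorted_list_of_set)
  define t where "t m = (if m = 0 then a else bs ! (m - 1))" for m
  show ?thesis
  proof (rule that)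
    show "t 0 = a" by (simp add: t_def)
    show "t i < t j" if "i < j" "j \<le> card B" for i j
    proof (cases "i = 0")
      case True
      have "bs ! (j - 1) \<in> B" using that bs(2,3) by (intro nth_mem[of "j - 1" bs, simplified bs(2)]) simp
      then show ?thesis using True that assms(2) by (simp add: t_def)
    next
      case False
      then show ?thesis using that bs sorted_wrt_nth_less[OF bs(1), of "i - 1" "j - 1"] by (simp add: t_def)
    qed
    show "t ` {1..card B} = B"
    proof
      show "t ` {1..card B} \<subseteq> B"
        using bs(2,3) by (auto simp: t_def)
      show "B \<subseteq> t ` {1..card B}"
      proof
        fix b assume "b \<in> B"
        then obtain k where "k < length bs" "b = bs ! k" using bs(2) by (metis in_set_conv_nth)
        then show "b \<in> t ` {1..card B}" using bs(3) by (intro image_eqI[of _ _ "Suc k"]) (auto simp: t_def)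
      qed
    qed
  qed
qed

lemma real_differentiable_cong_ev:
  fixes f g :: "real \<Rightarrow> real"
  assumes "eventually (\<lambda>t. f t = g t) (nhds s)"
  shows "f differentiable (at s) \<longleftrightarrow> g differentiable (at s)"
  using DERIV_cong_ev[OF refl assms refl] by (simp add: real_differentiable_def)

lemma concave_on_eq:
  assumes f: "concave_on S f" and eq: "\<And>x. x \<in> S \<Longrightarrow> f x = g x"
  shows "concave_on S g"
proof -
  have "convex S" using f by (rule concave_on_imp_convex)
  show ?thesis unfolding concave_on_iff
  proof (intro conjI \<open>convex S\<close> ballI allI impI)
    fix x y and u v :: real
    assume xy: "x \<in> S" "y \<in> S" and uv: "0 \<le> u" "0 \<le> v" "u + v = 1"
    then have "u *\<^sub>R x + v *\<^sub>R y \<in> S" using \<open>convex S\<close> by (simp add: convexD)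
    moreover have "u * f x + v * f y \<le> f (u *\<^sub>R x + v *\<^sub>R y)"
      using f xy uv unfolding concave_on_iff by blast
    ultimately show "u * g x + v * g y \<le> g (u *\<^sub>R x + v *\<^sub>R y)"
      using eq xy by simp
  qed
qed

lemma extreme_point_of_convex_hull_unique_min:
  fixes a e :: "'a::real_inner"
  assumes "e \<in> T" and min: "\<And>y. y \<in> T \<Longrightarrow> y \<noteq> e \<Longrightarrow> a \<bullet> e < a \<bullet> y"
  shows "e extreme_point_of convex hull T"
proof -
  \<comment> \<open>The open half-space above the hyperplane, together with the contact point, is convex.\<close>
  define K where "K = insert e {y. a \<bullet> e < a \<bullet> y}"
  have "convex K"
  proof (rule convexI)
    fix x y and u v :: real
    assume xy: "x \<in> K" "y \<in> K" and uv: "0 \<le> u" "0 \<le> v" "u + v = 1"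
    have ge: "a \<bullet> e \<le> a \<bullet> x" "a \<bullet> e \<le> a \<bullet> y" using xy by (auto simp: K_def)
    have lin: "a \<bullet> (u *\<^sub>R x + v *\<^sub>R y) = u * (a \<bullet> x) + v * (a \<bullet> y)"
      by (simp add: inner_add_right)
    consider "u = 0" | "v = 0" | "x = e" "y = e" | "0 < u" "0 < v" "x \<noteq> e \<or> y \<noteq> e"
      using uv by fastforce
    then show "u *\<^sub>R x + v *\<^sub>R y \<in> K"
    proof cases
      case 4
      then have "a \<bullet> e < a \<bullet> x \<or> a \<bullet> e < a \<bullet> y" using xy by (auto simp: K_def)
      then have "(u + v) * (a \<bullet> e) < u * (a \<bullet> x) + v * (a \<bullet> y)"
        using 4 ge by (smt (verit) distrib_right mult_le_cancel_left_pos mult_strict_left_mono)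
      then show ?thesis using lin uv by (simp add: K_def)
    qed (use xy uv in \<open>auto simp flip: scaleR_add_left\<close>)
  qed
  moreover have "T \<subseteq> K" using min by (auto simp: K_def)
  ultimately have hull: "convex hull T \<subseteq> K" by (intro hull_minimal)
  show ?thesis
  proof (rule extreme_point_of_Int_supporting_hyperplane_ge)
    show "convex hull T \<inter> {x. a \<bullet> x = a \<bullet> e} = {e}"
      using hull hull_inc[OF \<open>e \<in> T\<close>] by (auto simp: K_def)
    show "a \<bullet> e \<le> a \<bullet> x" if "x \<in> convex hull T" for x
      using hull that by (auto simp: K_def)
  qed
qed

text \<open>The last hypothesis says that \<open>(A, B)\<close> lies weakly to the right of the segment from
  \<open>P\<close> to \<open>R\<close>.\<close>
lemma segment_point_at_height:
  fixes P R :: "real \<times> real"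
  assumes "snd R < B" "B < snd P" "(fst R - A) * (snd P - B) \<le> (A - fst P) * (B - snd R)"
  obtains u where "0 < u" "u < 1" "snd ((1 - u) *\<^sub>R P + u *\<^sub>R R) = B"
    "fst ((1 - u) *\<^sub>R P + u *\<^sub>R R) \<le> A"
proof -
  obtain p1 p2 r1 r2 where PR: "P = (p1, p2)" "R = (r1, r2)" by (cases P, cases R)
  define u where "u = (p2 - B) / (p2 - r2)"
  have d: "0 < p2 - r2" using assms(1,2) PR by simp
  have "(p2 - B) * (r1 - p1) = (p2 - B) * (r1 - A) + (p2 - B) * (A - p1)"
    by (simp add: algebra_simps)
  also have "\<dots> \<le> (A - p1) * (B - r2) + (A - p1) * (p2 - B)"
    using assms(3) PR by (simp add: mult.commute)
  also have "\<dots> = (A - p1) * (p2 - r2)" by (simp add: algebra_simps)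
  finally have "u * (r1 - p1) \<le> A - p1" using d by (simp add: u_def divide_le_eq mult.commute)
  then have "(1 - u) * p1 + u * r1 \<le> A" by (simp add: algebra_simps)
  moreover have "u * (p2 - r2) = p2 - B" using d by (simp add: u_def)
  then have "(1 - u) * p2 + u * r2 = B" by (simp add: algebra_simps)
  moreover have "0 < u" "u < 1" using assms(1,2) PR by (simp_all add: u_def divide_less_eq)
  ultimately show ?thesis using that[of u] PR by simp
qed

lemma finite_dominating_subset:
  fixes S :: "(nat \<times> nat) set"
  assumes "S \<noteq> {}"
  obtains F where "finite F" "F \<noteq> {}" "F \<subseteq> S"
    "\<And>z. z \<in> S \<Longrightarrow> \<exists>w\<in>F. fst w \<le> fst z \<and> snd w \<le> snd z"
proof -
  obtain z0 where z0: "z0 \<in> S" using assms by blast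
  obtain zL where zL: "zL \<in> S" "\<And>z. z \<in> S \<Longrightarrow> fst zL \<le> fst z"
    using ex_has_least_nat[of "\<lambda>z. z \<in> S" z0 fst] z0 by blast
  obtain zB where zB: "zB \<in> S" "\<And>z. z \<in> S \<Longrightarrow> snd zB \<le> snd z"
    using ex_has_least_nat[of "\<lambda>z. z \<in> S" z0 snd] z0 by blast
  define F where "F = {z \<in> S. fst z \<le> fst zB \<and> snd z \<le> snd zL}"
  have "F \<subseteq> {..fst zB} \<times> {..snd zL}" by (auto simp: F_def)
  then have "finite F" by (rule finite_subset) simp
  have F: "zL \<in> F" "zB \<in> F" using zL zB by (auto simp: F_def)
  have dom: "\<exists>w\<in>F. fst w \<le> fst z \<and> snd w \<le> snd z" if z: "z \<in> S" for z
  proof (cases "z \<in> F")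
    case False
    then have "fst zB < fst z \<or> snd zL < snd z" using z by (auto simp: F_def)
    then show ?thesis using zL(2)[OF z] zB(2)[OF z] F by (metis less_imp_le)
  qed auto
  have "F \<noteq> {}" using F(1) by blast
  moreover have "F \<subseteq> S" by (auto simp: F_def)
  ultimately show ?thesis using that[OF \<open>finite F\<close>] dom by blast
qed

lemma Inf_weights_first_row:
  fixes S :: "(nat \<times> nat) set"
  assumes "(d, 0) \<in> S" "\<And>i. i < d \<Longrightarrow> (i, 0) \<notin> S" "real d \<le> s"
  shows "Inf {real i + s * real j | i j. (i, j) \<in> S} = real d"
proof (rule cInf_eq_minimum)
  show "real d \<in> {real i + s * real j | i j. (i, j) \<in> S}"
    using assms(1) by (intro CollectI exI[of _ d] exI[of _ 0]) simp
  fix y assume "y \<in> {real i + s * real j | i j. (i, j) \<in> S}"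
  then obtain i j where ij: "(i, j) \<in> S" "y = real i + s * real j" by blast
  show "real d \<le> y"
  proof (cases "j = 0")
    case True
    then have "d \<le> i" using ij(1) assms(2) not_less by blast
    then show ?thesis using ij True by simp
  next
    case False
    then have "s \<le> s * real j" using assms(3) by (simp add: mult_le_cancel_left1)
    then show ?thesis using ij assms(3) by simp
  qed
qed

definition weight :: "nat \<times> nat \<Rightarrow> real \<Rightarrow> real" where
  "weight z s = real (fst z) + s * real (snd z)"

definition crossing :: "nat \<times> nat \<Rightarrow> nat \<times> nat \<Rightarrow> real" where
  "crossing u w = (real (fst w) - real (fst u)) / (real (snd u) - real (snd w))"

lemma weight_diff:
  "weight z t - weight w t = (weight z s - weight w s) + (t - s) * (real (snd z) - real (snd w))"
  by (simp add: weight_def algebra_simps)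

lemma weight_eq_iff_crossing:
  "snd u \<noteq> snd w \<Longrightarrow> weight u s = weight w s \<longleftrightarrow> s = crossing u w"
  by (auto simp: weight_def crossing_def field_simps)

lemma continuous_on_weight: "continuous_on A (weight z)"
  unfolding weight_def by (intro continuous_intros)

lemma weight_has_real_derivative: "(weight z has_real_derivative real (snd z)) (at s)"
  unfolding weight_def by (auto intro!: derivative_eq_intros)

definition lattice_pt :: "nat \<times> nat \<Rightarrow> real \<times> real" where
  "lattice_pt z = (real (fst z), real (snd z))"

definition quadrant :: "nat \<times> nat \<Rightarrow> (real \<times> real) set" where
  "quadrant z = {(real (fst z) + u, real (snd z) + v) | u v. 0 \<le> u \<and> 0 \<le> v}"

lemma lattice_pt_eq_iff [simp]: "lattice_pt u = lattice_pt w \<longleftrightarrow> u = w"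
  by (auto simp: lattice_pt_def prod_eq_iff)

lemma inner_lattice_pt: "(1, s) \<bullet> lattice_pt z = weight z s"
  by (simp add: lattice_pt_def weight_def)

lemma edge_slope_lattice_pt: "edge_slope (lattice_pt u, lattice_pt w) = - 1 / crossing u w"
proof -
  have "- 1 / crossing u w = - (real (snd u) - real (snd w)) / (real (fst w) - real (fst u))"
    unfolding crossing_def by (simp add: divide_divide_eq_right)
  then show ?thesis by (simp add: edge_slope_def lattice_pt_def)
qed

lemma lattice_pt_in_quadrant: "lattice_pt z \<in> quadrant z"
  unfolding lattice_pt_def quadrant_def by force

lemma quadrant_add: "y \<in> quadrant z \<Longrightarrow> 0 \<le> a \<Longrightarrow> 0 \<le> b \<Longrightarrow> y + (a, b) \<in> quadrant z"
  unfolding quadrant_def by clarsimp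

lemma quadrant_mono:
  assumes "fst w \<le> fst z" "snd w \<le> snd z"
  shows "quadrant z \<subseteq> quadrant w"
proof
  fix y assume "y \<in> quadrant z"
  then obtain a b where ab: "0 \<le> a" "0 \<le> b" "y = (real (fst z) + a, real (snd z) + b)"
    by (auto simp: quadrant_def)
  show "y \<in> quadrant w" unfolding quadrant_def using assms ab
    by (intro CollectI exI[of _ "real (fst z) - real (fst w) + a"] exI[of _ "real (snd z) - real (snd w) + b"])
      auto
qed

section \<open>The lower envelope of finitely many lines\<close>

text \<open>\<open>F\<close> is a finite set of exponents \<open>(i, j)\<close>; the envelope is \<open>s \<mapsto> min (i + s j)\<close>,
  the function \<open>v\<^sub>1\<close> of the paper once \<open>F\<close> dominates the support of the \<open>C\<close>-expansion.\<close>
locale lower_envelope =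
  fixes F :: "(nat \<times> nat) set"
  assumes finite_F: "finite F" and F_nonempty: "F \<noteq> {}"
begin

definition envelope :: "real \<Rightarrow> real" where
  "envelope s = Min ((\<lambda>z. weight z s) ` F)"

definition active :: "real \<Rightarrow> (nat \<times> nat) set" where
  "active s = {z \<in> F. weight z s = envelope s}"

definition breakpoint :: "real \<Rightarrow> bool" where
  "breakpoint s \<longleftrightarrow> (\<exists>z\<in>active s. \<exists>w\<in>active s. z \<noteq> w)"

definition sole_minimizer :: "nat \<times> nat \<Rightarrow> real \<Rightarrow> bool" where
  "sole_minimizer z s \<longleftrightarrow> z \<in> F \<and> (\<forall>w\<in>F. w \<noteq> z \<longrightarrow> weight z s < weight w s)"

definition vertices :: "(nat \<times> nat) set" where
  "vertices = {z. \<exists>s>0. sole_minimizer z s}"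

definition consecutive :: "nat \<times> nat \<Rightarrow> nat \<times> nat \<Rightarrow> bool" where
  "consecutive u w \<longleftrightarrow> u \<in> vertices \<and> w \<in> vertices \<and> fst u < fst w \<and>
     \<not> (\<exists>c\<in>vertices. fst u < fst c \<and> fst c < fst w)"

lemma envelope_le_weight: "z \<in> F \<Longrightarrow> envelope s \<le> weight z s"
  unfolding envelope_def using finite_F by simp

lemma active_nonempty: "\<exists>z. z \<in> active s"
proof -
  have "envelope s \<in> (\<lambda>z. weight z s) ` F"
    unfolding envelope_def using finite_F F_nonempty by (intro Min_in) auto
  then show ?thesis by (force simp: active_def)
qed

lemma active_in_F: "z \<in> active s \<Longrightarrow> z \<in> F"
  by (simp add: active_def)

lemma weight_active: "z \<in> active s \<Longrightarrow> weight z s = envelope s"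
  by (simp add: active_def)

lemma activeI: "z \<in> F \<Longrightarrow> weight z s \<le> envelope s \<Longrightarrow> z \<in> active s"
  using envelope_le_weight[of z s] by (simp add: active_def)

lemma active_snd_inj: "z \<in> active s \<Longrightarrow> w \<in> active s \<Longrightarrow> snd z = snd w \<Longrightarrow> z = w"
  by (auto simp: active_def weight_def intro: prod_eqI)

lemma active_weight_diff:
  "z \<in> active s \<Longrightarrow> w \<in> active s \<Longrightarrow> weight z t - weight w t = (t - s) * (real (snd z) - real (snd w))"
  using weight_diff[of z t w s] by (simp add: weight_active)

lemma active_greatest_snd:
  obtains l where "l \<in> active s" "\<And>z. z \<in> active s \<Longrightarrow> snd z \<le> snd l"
proof -
  have "finite (snd ` active s)" "snd ` active s \<noteq> {}"
    using finite_F active_nonempty by (auto simp: active_def)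
  then have "Max (snd ` active s) \<in> snd ` active s" by (rule Max_in)
  then obtain l where "l \<in> active s" "snd l = Max (snd ` active s)" by auto
  then show ?thesis using that \<open>finite (snd ` active s)\<close> by simp
qed

lemma active_least_snd:
  obtains r where "r \<in> active s" "\<And>z. z \<in> active s \<Longrightarrow> snd r \<le> snd z"
proof -
  have "finite (snd ` active s)" "snd ` active s \<noteq> {}"
    using finite_F active_nonempty by (auto simp: active_def)
  then have "Min (snd ` active s) \<in> snd ` active s" by (rule Min_in)
  then obtain r where "r \<in> active s" "snd r = Min (snd ` active s)" by auto
  then show ?thesis using that \<open>finite (snd ` active s)\<close> by simp
qed

lemma continuous_on_envelope: "continuous_on A envelope"
proof -
  have "continuous_on A (\<lambda>s. Min ((\<lambda>z. weight z s) ` G))" if "finite G" "G \<noteq> {}" for G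
    using that
  proof (induction G rule: finite_ne_induct)
    case (insert x G)
    then show ?case
      by (simp add: Min_insert continuous_on_min continuous_on_weight)
  qed (simp add: continuous_on_weight)
  then show ?thesis
    unfolding envelope_def[abs_def] using finite_F F_nonempty by blast
qed

lemma mono_on_envelope: "mono_on {0..} envelope"
proof (rule mono_onI)
  fix x y :: real assume "x \<in> {0..}" "y \<in> {0..}" "x \<le> y"
  obtain z where z: "z \<in> active y" using active_nonempty by blast
  have "envelope x \<le> weight z x" using active_in_F[OF z] by (rule envelope_le_weight)
  also have "\<dots> \<le> weight z y" using \<open>x \<le> y\<close> by (simp add: weight_def mult_right_mono)
  finally show "envelope x \<le> envelope y" using weight_active[OF z] by simp
qed

lemma concave_on_envelope:
  assumes "convex A"
  shows "concave_on A envelope"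
proof (rule concave_on_linorderI)
  fix t x y :: real assume t: "0 < t" "t < 1"
  obtain z where z: "z \<in> active ((1 - t) *\<^sub>R x + t *\<^sub>R y)" using active_nonempty by blast
  have "(1 - t) * envelope x \<le> (1 - t) * weight z x" "t * envelope y \<le> t * weight z y"
    using t envelope_le_weight[OF active_in_F[OF z]] by simp_all
  moreover have "(1 - t) * weight z x + t * weight z y = weight z ((1 - t) *\<^sub>R x + t *\<^sub>R y)"
    by (simp add: weight_def algebra_simps)
  ultimately show "(1 - t) * envelope x + t * envelope y \<le> envelope ((1 - t) *\<^sub>R x + t *\<^sub>R y)"
    using weight_active[OF z] by linarith
qed (rule assms)

lemma eventually_below_inactive:
  assumes z: "z \<in> active s"
  shows "eventually (\<lambda>t. \<forall>w\<in>F - active s. weight z t < weight w t) (nhds s)"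
proof -
  have "eventually (\<lambda>t. weight z t < weight w t) (nhds s)" if w: "w \<in> F - active s" for w
  proof -
    have "weight z s < weight w s"
      using w weight_active[OF z] envelope_le_weight[of w s] by (auto simp: active_def)
    moreover have "((\<lambda>t. weight w t - weight z t) \<longlongrightarrow> weight w s - weight z s) (nhds s)"
      unfolding weight_def by (intro tendsto_intros filterlim_ident)
    ultimately have "eventually (\<lambda>t. 0 < weight w t - weight z t) (nhds s)"
      by (intro order_tendstoD(1)) auto
    then show ?thesis by eventually_elim simp
  qed
  then show ?thesis using finite_F by (intro eventually_ball_finite) auto
qed

lemma envelope_eventually_eq_weight:
  assumes z: "z \<in> active s" and "\<not> breakpoint s"
  shows "eventually (\<lambda>t. envelope t = weight z t) (nhds s)"
  using eventually_below_inactive[OF z]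
proof eventually_elim
  case (elim t)
  obtain w where w: "w \<in> active t" using active_nonempty by blast
  have "w = z"
  proof (rule ccontr)
    assume "w \<noteq> z"
    then have "w \<notin> active s" using z \<open>\<not> breakpoint s\<close> by (auto simp: breakpoint_def)
    then have "weight z t < weight w t" using elim active_in_F[OF w] by blast
    then show False
      using envelope_le_weight[OF active_in_F[OF z], of t] weight_active[OF w] by simp
  qed
  then show ?case using weight_active[OF w] by simp
qed

text \<open>Every active line touches the envelope from above, so it shares its derivative.\<close>
lemma envelope_derivative_eq_snd_active:
  assumes D: "(envelope has_real_derivative D) (at s)" and z: "z \<in> active s"
  shows "D = real (snd z)"
proof -
  have "((\<lambda>t. weight z t - envelope t) has_real_derivative real (snd z) - D) (at s)"
    using weight_has_real_derivative D by (rule DERIV_diff)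
  moreover have "\<forall>t. \<bar>s - t\<bar> < 1 \<longrightarrow> weight z s - envelope s \<le> weight z t - envelope t"
    using weight_active[OF z] envelope_le_weight[OF active_in_F[OF z]] by simp
  ultimately have "real (snd z) - D = 0" by (rule DERIV_local_min[OF _ zero_less_one])
  then show ?thesis by simp
qed

lemma envelope_differentiable_iff: "envelope differentiable (at s) \<longleftrightarrow> \<not> breakpoint s"
proof
  assume "envelope differentiable (at s)"
  then obtain D where D: "(envelope has_real_derivative D) (at s)"
    by (auto simp: real_differentiable_def)
  have "z = w" if "z \<in> active s" "w \<in> active s" for z w
    using envelope_derivative_eq_snd_active[OF D that(1)] envelope_derivative_eq_snd_active[OF D that(2)]
    by (intro active_snd_inj[OF that]) simp
  then show "\<not> breakpoint s" by (auto simp: breakpoint_def)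
next
  assume "\<not> breakpoint s"
  obtain z where z: "z \<in> active s" using active_nonempty by blast
  have "weight z differentiable (at s)"
    using weight_has_real_derivative real_differentiable_def by blast
  then show "envelope differentiable (at s)"
    using real_differentiable_cong_ev[OF envelope_eventually_eq_weight[OF z \<open>\<not> breakpoint s\<close>]] by simp
qed

lemma breakpoint_imp_crossing:
  assumes "breakpoint s"
  shows "\<exists>u\<in>F. \<exists>w\<in>F. snd u \<noteq> snd w \<and> s = crossing u w"
proof -
  obtain u w where uw: "u \<in> active s" "w \<in> active s" "u \<noteq> w"
    using assms by (auto simp: breakpoint_def)
  then have "snd u \<noteq> snd w" using active_snd_inj by blast
  moreover have "weight u s = weight w s" using uw by (simp add: weight_active)
  ultimately show ?thesis using uw active_in_F weight_eq_iff_crossing by blast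
qed

lemma finite_breakpoints: "finite {s. breakpoint s}"
proof (rule finite_subset)
  show "{s. breakpoint s} \<subseteq> (\<lambda>(u, w). crossing u w) ` (F \<times> F)"
    using breakpoint_imp_crossing by fastforce
qed (simp add: finite_F)

lemma envelope_linear_on_gap:
  assumes I: "connected I" "t0 \<in> I" and no_bp: "\<And>c. c \<in> I \<Longrightarrow> \<not> breakpoint c"
  obtains z where "z \<in> F" "\<And>t. t \<in> closure I \<Longrightarrow> envelope t = weight z t"
proof -
  define g where "g t = (SOME z. z \<in> active t)" for t
  have g: "g t \<in> active t" for t
    unfolding g_def using active_nonempty by (rule someI_ex)
  have unique: "w = g t" if "t \<in> I" "w \<in> active t" for t w
    using no_bp[OF that(1)] g[of t] that(2) by (auto simp: breakpoint_def)
  \<comment> \<open>The unique active exponent is locally constant, hence constant on the connected gap.\<close>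
  have const: "g t0 = g t" if "t \<in> I" for t
  proof (rule connected_local_const[OF I that], rule ballI)
    fix c assume c: "c \<in> I"
    have "eventually (\<lambda>t. t \<in> I \<longrightarrow> g c = g t) (nhds c)"
      using envelope_eventually_eq_weight[OF g no_bp[OF c]]
    proof eventually_elim
      case (elim t)
      then have "g c \<in> active t" using active_in_F[OF g] by (intro activeI) auto
      then show ?case using unique by blast
    qed
    then show "eventually (\<lambda>t. g c = g t) (at c within I)"
      unfolding eventually_at_filter by eventually_elim auto
  qed
  have "I \<subseteq> {t. envelope t = weight (g t0) t}"
    using const weight_active[OF g] by auto
  moreover have "closed {t. envelope t = weight (g t0) t}"
    by (intro closed_Collect_eq continuous_on_envelope continuous_on_weight)
  ultimately have "closure I \<subseteq> {t. envelope t = weight (g t0) t}"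
    by (rule closure_minimal)
  then show ?thesis using that[of "g t0"] active_in_F[OF g] by auto
qed

lemma envelope_linear_between:
  assumes "c < d" "\<And>s. c < s \<Longrightarrow> s < d \<Longrightarrow> \<not> breakpoint s"
  obtains z where "z \<in> F" "\<And>s. c \<le> s \<Longrightarrow> s \<le> d \<Longrightarrow> envelope s = weight z s"
proof -
  have mid: "(c + d) / 2 \<in> {c<..<d}" using assms(1) by simp
  obtain z where "z \<in> F" "\<And>t. t \<in> closure {c<..<d} \<Longrightarrow> envelope t = weight z t"
    by (rule envelope_linear_on_gap[OF connected_Ioo mid]) (use assms(2) in auto)
  then show ?thesis using that assms(1) by simp
qed

lemma envelope_linear_beyond:
  assumes "\<And>s. c < s \<Longrightarrow> \<not> breakpoint s"
  obtains z where "z \<in> F" "\<And>s. c \<le> s \<Longrightarrow> envelope s = weight z s"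
proof -
  have "c + 1 \<in> {c<..}" by simp
  then obtain z where "z \<in> F" "\<And>t. t \<in> closure {c<..} \<Longrightarrow> envelope t = weight z t"
    using envelope_linear_on_gap[OF connected_Ioi] assms by blast
  then show ?thesis using that by simp
qed

lemma breakpoint_slopes_differ:
  assumes "c < b" "b < d" "breakpoint b"
    and z: "\<And>s. c \<le> s \<Longrightarrow> s \<le> b \<Longrightarrow> envelope s = weight z s"
    and w: "\<And>s. b \<le> s \<Longrightarrow> s \<le> d \<Longrightarrow> envelope s = weight w s"
  shows "snd z \<noteq> snd w"
proof
  assume "snd z = snd w"
  moreover have "weight z b = weight w b"
    using z[of b] w[of b] assms(1,2) by (simp add: less_imp_le)
  ultimately have "z = w" by (auto simp: weight_def intro: prod_eqI)
  have "eventually (\<lambda>s. s \<in> {c<..<d}) (nhds b)"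
    using assms(1,2) by (intro eventually_nhds_in_open) auto
  then have "eventually (\<lambda>s. envelope s = weight z s) (nhds b)"
    by eventually_elim (metis z w \<open>z = w\<close> less_imp_le linorder_le_cases greaterThanLessThan_iff)
  then have "envelope differentiable (at b)"
    using real_differentiable_cong_ev weight_has_real_derivative real_differentiable_def by blast
  then show False using assms(3) envelope_differentiable_iff by blast
qed

lemma breakpoints_enumeration:
  fixes a :: real
  defines "N \<equiv> Suc (card {s. a < s \<and> breakpoint s})"
  obtains t where "t 0 = a" "\<And>m. m < N \<Longrightarrow> a \<le> t m" "\<And>m. Suc m < N \<Longrightarrow> t m < t (Suc m)"
    "\<And>m. Suc m < N \<Longrightarrow> breakpoint (t (Suc m))"
    "\<And>m c. m < N \<Longrightarrow> t m < c \<Longrightarrow> (Suc m < N \<longrightarrow> c < t (Suc m)) \<Longrightarrow> \<not> breakpoint c"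
proof -
  define B where "B = {s. a < s \<and> breakpoint s}"
  have "finite B" using finite_subset[OF _ finite_breakpoints] by (auto simp: B_def)
  then obtain t where t0: "t 0 = a" and t_less: "\<And>i j. i < j \<Longrightarrow> j \<le> card B \<Longrightarrow> t i < t j"
    and t_B: "t ` {1..card B} = B"
    using finite_set_enumeration_above[OF \<open>finite B\<close>, of a] by (auto simp: B_def)
  have N: "N = Suc (card B)" by (simp add: N_def B_def)
  have t_ge: "a \<le> t m" if "m < N" for m using t0 t_less[of 0 m] that by (cases m) (auto simp: N)
  have t_bp: "breakpoint (t (Suc m))" if "Suc m < N" for m
  proof -
    have "t (Suc m) \<in> t ` {1..card B}" using that by (simp add: N)
    then show ?thesis by (simp only: t_B) (simp add: B_def)
  qed
  have no_bp: "\<not> breakpoint c" if m: "m < N" and c: "t m < c" "Suc m < N \<longrightarrow> c < t (Suc m)" for m c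
  proof
    assume "breakpoint c"
    then have "c \<in> B" using t_ge[OF m] c(1) by (simp add: B_def)
    then have "c \<in> t ` {1..card B}" by (simp only: t_B)
    then obtain k where k: "1 \<le> k" "k \<le> card B" "c = t k" by auto
    have "m < k"
    proof (rule ccontr)
      assume "\<not> m < k"
      then have "t k \<le> t m" using t_less[of k m] m by (cases "k = m") (auto simp: N)
      then show False using c(1) k(3) by simp
    qed
    moreover have "t (Suc m) \<le> t k" using \<open>m < k\<close> k t_less[of "Suc m" k] by (cases "Suc m = k") auto
    ultimately show False using c(2) k by (auto simp: N)
  qed
  show ?thesis using that t0 t_ge t_less t_bp no_bp by (simp add: N)
qed

lemma envelope_linear_on_pieces:
  assumes t_less: "\<And>m. Suc m < N \<Longrightarrow> t m < t (Suc m)"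
    and no_bp: "\<And>m c. m < N \<Longrightarrow> t m < c \<Longrightarrow> (Suc m < N \<longrightarrow> c < t (Suc m)) \<Longrightarrow> \<not> breakpoint c"
  shows "\<exists>z. \<forall>m<N. \<forall>s. t m \<le> s \<and> (Suc m < N \<longrightarrow> s \<le> t (Suc m)) \<longrightarrow> envelope s = weight (z m) s"
proof -
  have "\<exists>z. \<forall>s. t m \<le> s \<and> (Suc m < N \<longrightarrow> s \<le> t (Suc m)) \<longrightarrow> envelope s = weight z s"
    if m: "m \<in> {..<N}" for m
  proof (cases "Suc m < N")
    case True
    then obtain z where "\<And>s. t m \<le> s \<Longrightarrow> s \<le> t (Suc m) \<Longrightarrow> envelope s = weight z s"
      using envelope_linear_between t_less no_bp m by (metis lessThan_iff)
    then show ?thesis using True by blast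
  next
    case False
    then obtain z where "\<And>s. t m \<le> s \<Longrightarrow> envelope s = weight z s"
      using envelope_linear_beyond no_bp m by (metis lessThan_iff)
    then show ?thesis by blast
  qed
  then have "\<exists>z. \<forall>m\<in>{..<N}. \<forall>s. t m \<le> s \<and> (Suc m < N \<longrightarrow> s \<le> t (Suc m)) \<longrightarrow>
      envelope s = weight (z m) s"
    by (rule bchoice[OF ballI])
  then show ?thesis by (simp only: Ball_def lessThan_iff)
qed

lemma piecewise_linear_if_eq_envelope:
  fixes f :: "real \<Rightarrow> real"
  assumes f: "\<And>s. a \<le> s \<Longrightarrow> f s = envelope s"
  shows "\<exists>(t :: nat \<Rightarrow> real) (\<sigma> :: nat \<Rightarrow> real) (\<beta> :: nat \<Rightarrow> real) (N :: nat).
     N = Suc (card {s. a < s \<and> breakpoint s}) \<and>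
     t 0 = a \<and> (\<forall>m. Suc m < N \<longrightarrow> t m < t (Suc m)) \<and>
     (\<forall>m < N. \<sigma> m \<in> \<rat> \<and>
        (\<forall>s. t m \<le> s \<and> (Suc m < N \<longrightarrow> s \<le> t (Suc m)) \<longrightarrow> f s = \<sigma> m * s + \<beta> m)) \<and>
     (\<forall>m. Suc m < N \<longrightarrow> \<sigma> m \<noteq> \<sigma> (Suc m))"
proof -
  define N where "N = Suc (card {s. a < s \<and> breakpoint s})"
  obtain t where t0: "t 0 = a" and t_ge: "\<And>m. m < N \<Longrightarrow> a \<le> t m"
    and t_less: "\<And>m. Suc m < N \<Longrightarrow> t m < t (Suc m)"
    and t_bp: "\<And>m. Suc m < N \<Longrightarrow> breakpoint (t (Suc m))"
    and no_bp: "\<And>m c. m < N \<Longrightarrow> t m < c \<Longrightarrow> (Suc m < N \<longrightarrow> c < t (Suc m)) \<Longrightarrow> \<not> breakpoint c"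
    using breakpoints_enumeration[of a, folded N_def] by blast
  have "\<exists>z. \<forall>m<N. \<forall>s. t m \<le> s \<and> (Suc m < N \<longrightarrow> s \<le> t (Suc m)) \<longrightarrow> envelope s = weight (z m) s"
    using t_less no_bp by (rule envelope_linear_on_pieces)
  then obtain z where z: "\<And>m s. m < N \<Longrightarrow> t m \<le> s \<Longrightarrow> (Suc m < N \<longrightarrow> s \<le> t (Suc m)) \<Longrightarrow>
      envelope s = weight (z m) s"
    by blast
  have slopes: "snd (z m) \<noteq> snd (z (Suc m))" if m: "Suc m < N" for m
  proof (rule breakpoint_slopes_differ)
    define d where "d = (if Suc (Suc m) < N then t (Suc (Suc m)) else t (Suc m) + 1)"
    show "t m < t (Suc m)" "breakpoint (t (Suc m))" using m t_less t_bp by simp_all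
    show "t (Suc m) < d" using t_less by (simp add: d_def)
    show "envelope s = weight (z m) s" if "t m \<le> s" "s \<le> t (Suc m)" for s
      using z[of m s] m that by simp
    show "envelope s = weight (z (Suc m)) s" if "t (Suc m) \<le> s" "s \<le> d" for s
      using z[of "Suc m" s] m that by (simp add: d_def split: if_splits)
  qed
  have pieces: "\<forall>m<N. real (snd (z m)) \<in> \<rat> \<and> (\<forall>s. t m \<le> s \<and> (Suc m < N \<longrightarrow> s \<le> t (Suc m)) \<longrightarrow>
      f s = real (snd (z m)) * s + real (fst (z m)))"
  proof (intro allI impI conjI)
    fix m assume m: "m < N"
    show "real (snd (z m)) \<in> \<rat>" by simp
    fix s assume s: "t m \<le> s \<and> (Suc m < N \<longrightarrow> s \<le> t (Suc m))"
    then have "a \<le> s" using t_ge[OF m] by linarith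
    then show "f s = real (snd (z m)) * s + real (fst (z m))"
      using z[OF m] s f by (simp add: weight_def)
  qed
  show ?thesis
    unfolding N_def[symmetric] using pieces slopes t0 t_less
    by (intro exI[of _ t] exI[of _ "\<lambda>m. real (snd (z m))"] exI[of _ "\<lambda>m. real (fst (z m))"] exI[of _ N])
      simp
qed

lemma differentiable_iff_eq_envelope:
  fixes f :: "real \<Rightarrow> real"
  assumes f: "\<And>s. a \<le> s \<Longrightarrow> f s = envelope s" and "a < s"
  shows "f differentiable (at s) \<longleftrightarrow> \<not> breakpoint s"
proof -
  have "eventually (\<lambda>t. t \<in> {a<..}) (nhds s)"
    using \<open>a < s\<close> by (intro eventually_nhds_in_open) auto
  then have "eventually (\<lambda>t. f t = envelope t) (nhds s)"
    by eventually_elim (simp add: f)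
  then show ?thesis using real_differentiable_cong_ev envelope_differentiable_iff by blast
qed

lemma eventually_sole_minimizer:
  assumes z: "z \<in> active s"
    and sign: "\<And>t w. P t \<Longrightarrow> w \<in> active s \<Longrightarrow> w \<noteq> z \<Longrightarrow> 0 < (t - s) * (real (snd w) - real (snd z))"
  shows "eventually (\<lambda>t. P t \<longrightarrow> sole_minimizer z t) (nhds s)"
  using eventually_below_inactive[OF z]
proof eventually_elim
  case (elim t)
  show ?case
  proof
    assume "P t"
    have "weight z t < weight w t" if w: "w \<in> F" "w \<noteq> z" for w
    proof (cases "w \<in> active s")
      case True
      then show ?thesis using sign[OF \<open>P t\<close> True w(2)] active_weight_diff[OF True z, of t] by simp
    next
      case False
      then show ?thesis using elim w by blast
    qed
    then show "sole_minimizer z t" using active_in_F[OF z] by (simp add: sole_minimizer_def)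
  qed
qed

lemma eventually_sole_minimizer_at_right:
  assumes z: "z \<in> active s" and least: "\<And>w. w \<in> active s \<Longrightarrow> snd z \<le> snd w"
  shows "eventually (\<lambda>t. sole_minimizer z t) (at_right s)"
proof -
  have "snd z < snd w" if "w \<in> active s" "w \<noteq> z" for w
    using least[OF that(1)] active_snd_inj[OF z that(1)] that(2) by fastforce
  then have "eventually (\<lambda>t. s < t \<longrightarrow> sole_minimizer z t) (nhds s)"
    by (intro eventually_sole_minimizer[OF z]) simp
  then show ?thesis unfolding eventually_at_filter by eventually_elim simp
qed

lemma eventually_sole_minimizer_at_left:
  assumes z: "z \<in> active s" and greatest: "\<And>w. w \<in> active s \<Longrightarrow> snd w \<le> snd z"
  shows "eventually (\<lambda>t. sole_minimizer z t) (at_left s)"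
proof -
  have "snd w < snd z" if "w \<in> active s" "w \<noteq> z" for w
    using greatest[OF that(1)] active_snd_inj[OF z that(1)] that(2) by fastforce
  then have "eventually (\<lambda>t. t < s \<longrightarrow> sole_minimizer z t) (nhds s)"
    by (intro eventually_sole_minimizer[OF z]) (simp add: mult_neg_neg)
  then show ?thesis unfolding eventually_at_filter by eventually_elim simp
qed

lemma vertex_minimal:
  assumes "v \<in> vertices" "w \<in> F" "fst w \<le> fst v" "snd w \<le> snd v"
  shows "w = v"
proof (rule ccontr)
  assume "w \<noteq> v"
  obtain s where s: "0 < s" "sole_minimizer v s" using assms(1) by (auto simp: vertices_def)
  then have "weight v s < weight w s" using assms(2) \<open>w \<noteq> v\<close> by (simp add: sole_minimizer_def)
  moreover have "weight w s \<le> weight v s"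
    using assms(3,4) s(1) unfolding weight_def by (intro add_mono mult_left_mono) auto
  ultimately show False by simp
qed

lemma sole_minimizers_ordered:
  assumes v: "sole_minimizer v sv" and w: "sole_minimizer w sw"
    and "0 < sv" "sv < sw" "v \<noteq> w"
  shows "snd w < snd v \<and> fst v < fst w"
proof -
  have "weight v sv < weight w sv" "weight w sw < weight v sw"
    using v w \<open>v \<noteq> w\<close> by (auto simp: sole_minimizer_def)
  then have "0 < (sw - sv) * (real (snd v) - real (snd w))"
    using weight_diff[of v sw w sv] by simp
  then have j: "snd w < snd v" using \<open>sv < sw\<close> by (simp add: zero_less_mult_iff)
  have "v \<in> vertices" using v \<open>0 < sv\<close> by (auto simp: vertices_def)
  then have "\<not> fst w \<le> fst v"
    using vertex_minimal[of v w] w j \<open>v \<noteq> w\<close> by (auto simp: sole_minimizer_def)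
  with j show ?thesis by simp
qed

lemma consecutive_sole_minimizers:
  assumes "consecutive u w"
  obtains su sw where "0 < su" "sole_minimizer u su" "0 < sw" "sole_minimizer w sw"
  using assms by (auto simp: consecutive_def vertices_def)

lemma consecutive_snd_less:
  assumes "consecutive u w"
  shows "snd w < snd u"
proof (rule ccontr)
  assume "\<not> snd w < snd u"
  moreover obtain su where "sole_minimizer u su" using assms by (rule consecutive_sole_minimizers)
  moreover have "w \<in> vertices" "fst u < fst w" using assms by (simp_all add: consecutive_def)
  ultimately show False using vertex_minimal[of w u] by (auto simp: sole_minimizer_def)
qed

lemma consecutive_crossing_between:
  assumes c: "consecutive u w" and u: "sole_minimizer u su" and w: "sole_minimizer w sw"
  shows "su < crossing u w" "crossing u w < sw"
proof -
  define s where "s = crossing u w"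
  have j: "snd w < snd u" using c by (rule consecutive_snd_less)
  then have eq: "weight u s = weight w s" by (simp add: weight_eq_iff_crossing s_def)
  have "u \<noteq> w" using j by auto
  then have "weight u su < weight w su" "weight w sw < weight u sw"
    using u w by (auto simp: sole_minimizer_def)
  then have "(su - s) * (real (snd u) - real (snd w)) < 0" "0 < (sw - s) * (real (snd u) - real (snd w))"
    using weight_diff[of u su w s] weight_diff[of u sw w s] eq by simp_all
  then show "su < s" "s < sw" using j by (simp_all add: mult_less_0_iff zero_less_mult_iff)
qed

lemma consecutive_active_at_crossing:
  assumes c: "consecutive u w"
  shows "0 < crossing u w \<and> u \<in> active (crossing u w) \<and> w \<in> active (crossing u w)"
proof -
  define s where "s = crossing u w"
  obtain su sw where su: "0 < su" "sole_minimizer u su" and sw: "0 < sw" "sole_minimizer w sw"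
    using c by (rule consecutive_sole_minimizers)
  have ss: "su < s" "s < sw" using consecutive_crossing_between[OF c su(2) sw(2)] by (simp_all add: s_def)
  have eq: "weight u s = weight w s"
    using consecutive_snd_less[OF c] by (simp add: weight_eq_iff_crossing s_def)
  have F: "u \<in> F" "w \<in> F" using su sw by (auto simp: sole_minimizer_def)
  \<comment> \<open>Otherwise the last exponent active before \<open>s\<close> would be a vertex strictly between
    \<open>u\<close> and \<open>w\<close>.\<close>
  have "u \<in> active s"
  proof (rule ccontr)
    assume nu: "u \<notin> active s"
    then have nw: "w \<notin> active s" using eq F by (auto simp: active_def)
    obtain l where l: "l \<in> active s" "\<And>z. z \<in> active s \<Longrightarrow> snd z \<le> snd l"
      using active_greatest_snd[of s] by blast
    have "eventually (\<lambda>t. sole_minimizer l t \<and> t \<in> {su<..<s}) (at_left s)"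
      using eventually_sole_minimizer_at_left[OF l] eventually_at_left_real[OF ss(1)]
      by (rule eventually_conj)
    then obtain t where t: "sole_minimizer l t" "su < t" "t < s"
      using eventually_happens'[OF trivial_limit_at_left_real] by auto
    have "l \<noteq> u" "l \<noteq> w" using l nu nw by auto
    then have "fst u < fst l" "fst l < fst w"
      using sole_minimizers_ordered[OF su(2) t(1)] sole_minimizers_ordered[OF t(1) sw(2)] su(1) t ss
      by auto
    moreover have "l \<in> vertices" using t su(1) by (auto simp: vertices_def intro!: exI[of _ t])
    ultimately show False using c unfolding consecutive_def by blast
  qed
  moreover then have "w \<in> active s" using eq F by (auto simp: active_def)
  ultimately show ?thesis using ss su by (simp add: s_def)
qed

lemma active_at_crossing_between:
  assumes c: "consecutive u w" and z: "z \<in> active (crossing u w)"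
  shows "snd w \<le> snd z \<and> snd z \<le> snd u"
proof -
  define s where "s = crossing u w"
  obtain su sw where su: "0 < su" "sole_minimizer u su" and sw: "0 < sw" "sole_minimizer w sw"
    using c by (rule consecutive_sole_minimizers)
  have ss: "su < s" "s < sw" using consecutive_crossing_between[OF c su(2) sw(2)] by (simp_all add: s_def)
  have uw: "u \<in> active s" "w \<in> active s" using consecutive_active_at_crossing[OF c] by (simp_all add: s_def)
  have zs: "z \<in> active s" "z \<in> F" using z active_in_F by (simp_all add: s_def)
  have "snd z \<le> snd u"
  proof (rule ccontr)
    assume "\<not> snd z \<le> snd u"
    then have "(su - s) * (real (snd z) - real (snd u)) < 0" using ss by (simp add: mult_less_0_iff)
    then have "weight z su < weight u su" using active_weight_diff[OF zs(1) uw(1), of su] by linarith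
    moreover have "z \<noteq> u" using \<open>\<not> snd z \<le> snd u\<close> by auto
    ultimately show False using su zs(2) by (auto simp: sole_minimizer_def)
  qed
  moreover have "snd w \<le> snd z"
  proof (rule ccontr)
    assume "\<not> snd w \<le> snd z"
    then have "(sw - s) * (real (snd z) - real (snd w)) < 0" using ss by (simp add: mult_less_0_iff)
    then have "weight z sw < weight w sw" using active_weight_diff[OF zs(1) uw(2), of sw] by linarith
    moreover have "z \<noteq> w" using \<open>\<not> snd w \<le> snd z\<close> by auto
    ultimately show False using sw zs(2) by (auto simp: sole_minimizer_def)
  qed
  ultimately show ?thesis by simp
qed

lemma consecutive_crossing_inj:
  assumes "consecutive u w" "consecutive u' w'" "crossing u w = crossing u' w'"
  shows "u = u' \<and> w = w'"
proof -
  define s where "s = crossing u w"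
  have a: "u \<in> active s" "w \<in> active s" "u' \<in> active s" "w' \<in> active s"
    using consecutive_active_at_crossing[OF assms(1)] consecutive_active_at_crossing[OF assms(2)] assms(3)
    by (simp_all add: s_def)
  have "snd u = snd u'" "snd w = snd w'"
    using active_at_crossing_between[OF assms(1)] active_at_crossing_between[OF assms(2)] a assms(3)
    by (simp_all add: s_def order_antisym)
  then show ?thesis using active_snd_inj a by blast
qed

lemma no_sole_minimizer_between_active:
  assumes "0 < s" "0 < sc" "l \<in> active s" "r \<in> active s" "sole_minimizer c sc"
    "fst l < fst c" "fst c < fst r"
  shows False
proof -
  have "c \<noteq> l" "c \<noteq> r" using assms(6,7) by auto
  then have below: "weight c sc < weight l sc" "weight c sc < weight r sc"
    using assms(3-5) active_in_F by (auto simp: sole_minimizer_def)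
  have above: "weight l s \<le> weight c s" "weight r s \<le> weight c s"
    using assms(3-5) weight_active envelope_le_weight by (auto simp: sole_minimizer_def)
  consider "sc < s" | "sc = s" | "s < sc" by linarith
  then show False
  proof cases
    case 1
    have "(sc - s) * (real (snd c) - real (snd l)) < 0"
      using weight_diff[of c sc l s] below(1) above(1) by simp
    then have "snd l < snd c" using 1 by (simp add: mult_less_0_iff)
    then have "sc * real (snd l) < sc * real (snd c)" using assms(2) by simp
    then show False using below(1) assms(6) by (simp add: weight_def)
  next
    case 2
    then show False using below(1) above(1) by simp
  next
    case 3
    have "(sc - s) * (real (snd c) - real (snd r)) < 0"
      using weight_diff[of c sc r s] below(2) above(2) by simp
    then have "snd c < snd r" using 3 by (simp add: mult_less_0_iff)
    then have "s * real (snd c) < s * real (snd r)" using assms(1) by simp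
    then show False using above(2) assms(7) by (simp add: weight_def)
  qed
qed

lemma active_greatest_snd_vertex:
  assumes "0 < s" and l: "l \<in> active s" "\<And>z. z \<in> active s \<Longrightarrow> snd z \<le> snd l"
  shows "l \<in> vertices"
proof -
  have "eventually (\<lambda>t. sole_minimizer l t \<and> t \<in> {0<..<s}) (at_left s)"
    using eventually_sole_minimizer_at_left[OF l] eventually_at_left_real[OF assms(1)]
    by (rule eventually_conj)
  then obtain t where "sole_minimizer l t" "0 < t"
    using eventually_happens'[OF trivial_limit_at_left_real] by auto
  then show ?thesis by (auto simp: vertices_def)
qed

lemma active_least_snd_vertex:
  assumes "0 \<le> s" and r: "r \<in> active s" "\<And>z. z \<in> active s \<Longrightarrow> snd r \<le> snd z"
  shows "r \<in> vertices"
proof -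
  have "eventually (\<lambda>t. sole_minimizer r t \<and> t \<in> {s<..<s + 1}) (at_right s)"
    using eventually_sole_minimizer_at_right[OF r] eventually_at_right_real[of s "s + 1"]
    by (intro eventually_conj) auto
  then obtain t where "sole_minimizer r t" "s < t"
    using eventually_happens'[OF trivial_limit_at_right_real] by auto
  then show ?thesis using assms(1) by (auto simp: vertices_def intro!: exI[of _ t])
qed

lemma breakpoint_iff_consecutive_crossing:
  assumes "0 < s"
  shows "breakpoint s \<longleftrightarrow> (\<exists>u w. consecutive u w \<and> s = crossing u w)"
proof
  assume "breakpoint s"
  obtain l where l: "l \<in> active s" "\<And>z. z \<in> active s \<Longrightarrow> snd z \<le> snd l"
    using active_greatest_snd[of s] by blast
  obtain r where r: "r \<in> active s" "\<And>z. z \<in> active s \<Longrightarrow> snd r \<le> snd z"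
    using active_least_snd[of s] by blast
  obtain z1 z2 where z: "z1 \<in> active s" "z2 \<in> active s" "z1 \<noteq> z2"
    using \<open>breakpoint s\<close> by (auto simp: breakpoint_def)
  then have "snd z1 \<noteq> snd z2" using active_snd_inj by blast
  then have j: "snd r < snd l" using l(2)[OF z(1)] l(2)[OF z(2)] r(2)[OF z(1)] r(2)[OF z(2)] by linarith
  have lV: "l \<in> vertices" using assms l by (rule active_greatest_snd_vertex)
  have rV: "r \<in> vertices" using assms r by (intro active_least_snd_vertex) simp_all
  have eq: "weight l s = weight r s" using l r by (simp add: weight_active)
  then have "s = crossing l r" using j by (simp add: weight_eq_iff_crossing)
  have "real (fst r) - real (fst l) = s * (real (snd l) - real (snd r))"
    using eq by (simp add: weight_def algebra_simps)
  also have "\<dots> > 0" using assms j by simp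
  finally have "fst l < fst r" by simp
  moreover have "\<not> (\<exists>c\<in>vertices. fst l < fst c \<and> fst c < fst r)"
  proof
    assume "\<exists>c\<in>vertices. fst l < fst c \<and> fst c < fst r"
    then obtain c sc where "0 < sc" "sole_minimizer c sc" "fst l < fst c" "fst c < fst r"
      by (auto simp: vertices_def)
    then show False using no_sole_minimizer_between_active[OF assms _ l(1) r(1)] by blast
  qed
  ultimately have "consecutive l r" using lV rV by (simp add: consecutive_def)
  with \<open>s = crossing l r\<close> show "\<exists>u w. consecutive u w \<and> s = crossing u w" by blast
next
  assume "\<exists>u w. consecutive u w \<and> s = crossing u w"
  then obtain u w where "consecutive u w" "s = crossing u w" by blast
  moreover have "u \<noteq> w" using consecutive_snd_less[OF \<open>consecutive u w\<close>] by auto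
  ultimately show "breakpoint s"
    using consecutive_active_at_crossing[OF \<open>consecutive u w\<close>] by (auto simp: breakpoint_def)
qed

subsection \<open>The Newton polyhedron\<close>

definition polyhedron :: "(real \<times> real) set" where
  "polyhedron = convex hull (\<Union>z\<in>F. quadrant z)"

definition edges :: "((real \<times> real) \<times> (real \<times> real)) set" where
  "edges = {(a, b). a \<in> lattice_pt ` vertices \<and> b \<in> lattice_pt ` vertices \<and> fst a < fst b \<and>
      \<not> (\<exists>c \<in> lattice_pt ` vertices. fst a < fst c \<and> fst c < fst b)}"

lemma lattice_pt_in_polyhedron: "z \<in> F \<Longrightarrow> lattice_pt z \<in> polyhedron"
  unfolding polyhedron_def using lattice_pt_in_quadrant by (intro hull_inc) blast

lemma polyhedron_add:
  assumes y: "y \<in> polyhedron" and "0 \<le> a" "0 \<le> b"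
  shows "y + (a, b) \<in> polyhedron"
proof -
  let ?T = "\<Union>z\<in>F. quadrant z"
  have "(\<lambda>x. (a, b) + x) ` ?T \<subseteq> ?T"
    using quadrant_add[OF _ assms(2,3)] by (fastforce simp: add.commute)
  then have "convex hull ((\<lambda>x. (a, b) + x) ` ?T) \<subseteq> polyhedron"
    unfolding polyhedron_def by (rule hull_mono)
  moreover have "(a, b) + y \<in> convex hull ((\<lambda>x. (a, b) + x) ` ?T)"
    unfolding convex_hull_translation using y polyhedron_def by blast
  ultimately have "(a, b) + y \<in> polyhedron" by blast
  then show ?thesis by (simp add: add.commute)
qed

text \<open>The polyhedron is stable under adding the positive quadrant, so an extreme point is
  the midpoint of any point below it and its reflection.\<close>
lemma extreme_point_polyhedron_minimal:
  assumes x: "x extreme_point_of polyhedron" and y: "y \<in> polyhedron"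
    and "fst y \<le> fst x" "snd y \<le> snd x"
  shows "y = x"
proof (rule ccontr)
  assume "y \<noteq> x"
  define y' where "y' = y + (2 * (fst x - fst y), 2 * (snd x - snd y))"
  have "y' \<in> polyhedron" unfolding y'_def using assms by (intro polyhedron_add) auto
  moreover have "x = midpoint y y'" by (simp add: y'_def midpoint_def prod_eq_iff)
  moreover have "y \<noteq> y'" using \<open>y \<noteq> x\<close> by (auto simp: y'_def prod_eq_iff)
  ultimately have "x \<in> open_segment y y'" by simp
  then show False using x y \<open>y' \<in> polyhedron\<close> unfolding extreme_point_of_def by blast
qed

lemma sole_minimizer_extreme_point:
  assumes z: "sole_minimizer z s" and s: "0 < s"
  shows "lattice_pt z extreme_point_of polyhedron"
  unfolding polyhedron_def
proof (rule extreme_point_of_convex_hull_unique_min[where a = "(1, s)"])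
  show "lattice_pt z \<in> (\<Union>w\<in>F. quadrant w)"
    using z lattice_pt_in_quadrant[of z] unfolding sole_minimizer_def by blast
  fix y assume "y \<in> (\<Union>w\<in>F. quadrant w)" "y \<noteq> lattice_pt z"
  then obtain w u v where w: "w \<in> F" "0 \<le> u" "0 \<le> v" "y = (real (fst w) + u, real (snd w) + v)"
    by (auto simp: quadrant_def)
  have "weight z s < weight w s + (u + s * v)"
  proof (cases "w = z")
    case True
    then have "u \<noteq> 0 \<or> v \<noteq> 0" using \<open>y \<noteq> lattice_pt z\<close> w(4) by (auto simp: lattice_pt_def)
    then have "0 < u \<or> 0 < s * v" using w(2,3) s by auto
    moreover have "0 \<le> s * v" using w(3) s by simp
    ultimately have "0 < u + s * v" using w(2) by linarith
    then show ?thesis using True by simp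
  next
    case False
    then have "weight z s < weight w s" using z w(1) by (simp add: sole_minimizer_def)
    moreover have "0 \<le> u + s * v" using w(2,3) s by simp
    ultimately show ?thesis by simp
  qed
  then show "(1, s) \<bullet> lattice_pt z < (1, s) \<bullet> y"
    using w(4) by (simp add: inner_lattice_pt weight_def algebra_simps)
qed

lemma extreme_point_polyhedron_lattice_pt:
  assumes x: "x extreme_point_of polyhedron"
  shows "\<exists>z\<in>F. x = lattice_pt z"
proof -
  have "x \<in> (\<Union>z\<in>F. quadrant z)"
    using x unfolding polyhedron_def by (rule extreme_point_of_convex_hull)
  then obtain z where z: "z \<in> F" "x \<in> quadrant z" by blast
  then have "lattice_pt z = x"
    by (intro extreme_point_polyhedron_minimal[OF x lattice_pt_in_polyhedron])
      (auto simp: quadrant_def lattice_pt_def)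
  with z show ?thesis by blast
qed

lemma extreme_lattice_pt_undominated:
  assumes x: "lattice_pt z extreme_point_of polyhedron" and w: "w \<in> F" "w \<noteq> z"
  shows "fst z < fst w \<or> snd z < snd w"
proof (rule ccontr)
  assume "\<not> (fst z < fst w \<or> snd z < snd w)"
  then have "lattice_pt w = lattice_pt z"
    using extreme_point_polyhedron_minimal[OF x lattice_pt_in_polyhedron[OF w(1)]]
    by (simp add: lattice_pt_def)
  then show False using w(2) by simp
qed

lemma lattice_pt_above_segment_not_extreme:
  assumes lr: "l \<in> F" "r \<in> F" "snd r < snd z" "snd z < snd l"
    and above: "(real (fst r) - real (fst z)) * (real (snd l) - real (snd z))
                \<le> (real (fst z) - real (fst l)) * (real (snd z) - real (snd r))"
  shows "\<not> lattice_pt z extreme_point_of polyhedron"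
proof
  assume x: "lattice_pt z extreme_point_of polyhedron"
  obtain u where u: "0 < u" "u < 1"
    and y: "snd ((1 - u) *\<^sub>R lattice_pt l + u *\<^sub>R lattice_pt r) = snd (lattice_pt z)"
           "fst ((1 - u) *\<^sub>R lattice_pt l + u *\<^sub>R lattice_pt r) \<le> fst (lattice_pt z)"
    by (rule segment_point_at_height[of "lattice_pt r" "snd (lattice_pt z)" "lattice_pt l" "fst (lattice_pt z)"])
      (use lr(3,4) above in \<open>simp_all add: lattice_pt_def\<close>)
  have P: "lattice_pt l \<in> polyhedron" "lattice_pt r \<in> polyhedron"
    using lr(1,2) by (simp_all add: lattice_pt_in_polyhedron)
  have yP: "(1 - u) *\<^sub>R lattice_pt l + u *\<^sub>R lattice_pt r \<in> polyhedron"
    using P u unfolding polyhedron_def by (intro convexD[OF convex_convex_hull]) auto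
  have eq: "lattice_pt z = (1 - u) *\<^sub>R lattice_pt l + u *\<^sub>R lattice_pt r"
    using extreme_point_polyhedron_minimal[OF x yP] y by simp
  have "snd r < snd l" using lr(3,4) by (rule less_trans)
  then have "lattice_pt l \<noteq> lattice_pt r" by auto
  then have "lattice_pt z \<in> open_segment (lattice_pt l) (lattice_pt r)"
    unfolding in_segment(2) using u eq by (intro conjI exI[of _ u]) simp_all
  then show False using x P unfolding extreme_point_of_def by blast
qed

lemma sole_minimizer_if_separated:
  assumes z: "z \<in> F" and s: "0 < s"
    and dom: "\<And>w. w \<in> F \<Longrightarrow> w \<noteq> z \<Longrightarrow> fst z < fst w \<or> snd z < snd w"
    and below: "\<And>w. w \<in> F \<Longrightarrow> snd w < snd z \<Longrightarrow>
      s * (real (snd z) - real (snd w)) < real (fst w) - real (fst z)"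
    and left: "\<And>w. w \<in> F \<Longrightarrow> snd z < snd w \<Longrightarrow> fst w < fst z \<Longrightarrow>
      real (fst z) - real (fst w) < s * (real (snd w) - real (snd z))"
  shows "sole_minimizer z s"
  unfolding sole_minimizer_def
proof (intro conjI z ballI impI)
  fix w assume w: "w \<in> F" "w \<noteq> z"
  consider "snd w < snd z" | "snd w = snd z" | "snd z < snd w" "fst w < fst z"
    | "snd z < snd w" "fst z \<le> fst w"
    by fastforce
  then show "weight z s < weight w s"
  proof cases
    case 1
    then show ?thesis using below[OF w(1)] by (simp add: weight_def algebra_simps)
  next
    case 2
    then show ?thesis using dom[OF w] by (simp add: weight_def)
  next
    case 3
    then show ?thesis using left[OF w(1)] by (simp add: weight_def algebra_simps)
  next
    case 4
    then show ?thesis using s by (simp add: weight_def add_le_less_mono)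
  qed
qed

text \<open>The exponents below an extreme lattice point lie to its right, and it is not to the
  right of a segment joining an exponent above and to the left of it with one below it; hence the
  critical weights \<open>al\<close> of the former exponents are smaller than the critical weights \<open>be\<close> of the
  latter, and any \<open>s\<close> in between makes the point the sole minimizer.\<close>
lemma extreme_lattice_pt_vertex:
  assumes z: "z \<in> F" and x: "lattice_pt z extreme_point_of polyhedron"
  shows "z \<in> vertices"
proof -
  define A B where "A = real (fst z)" and "B = real (snd z)"
  define L R where "L = {l \<in> F. snd z < snd l \<and> fst l < fst z}" and "R = {r \<in> F. snd r < snd z}"
  define al where "al l = (A - real (fst l)) / (real (snd l) - B)" for l :: "nat \<times> nat"
  define be where "be r = (real (fst r) - A) / (B - real (snd r))" for r :: "nat \<times> nat"
  have R_right: "A < real (fst r)" "real (snd r) < B" if "r \<in> R" for r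
    using extreme_lattice_pt_undominated[OF x, of r] that by (auto simp: R_def A_def B_def)
  have sep: "al l < be r" if l: "l \<in> L" and r: "r \<in> R" for l r
  proof (rule ccontr)
    have dl: "0 < real (snd l) - B" and dr: "0 < B - real (snd r)"
      using l r by (auto simp: L_def R_def B_def)
    assume "\<not> al l < be r"
    then have "(real (fst r) - A) * (real (snd l) - B) \<le> (A - real (fst l)) * (B - real (snd r))"
      using dl dr by (simp add: al_def be_def not_less divide_le_eq le_divide_eq mult.commute)
    then show False
      using lattice_pt_above_segment_not_extreme[of l r z] l r x by (auto simp: L_def R_def A_def B_def)
  qed
  obtain s where s: "0 < s" "\<And>l. l \<in> L \<Longrightarrow> al l < s" "\<And>r. r \<in> R \<Longrightarrow> s < be r"
  proof (rule real_between_finite_sets[of "al ` L" "be ` R"])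
    show "finite (al ` L)" "finite (be ` R)" using finite_F by (simp_all add: L_def R_def)
    show "a < b" if "a \<in> al ` L" "b \<in> be ` R" for a b using that sep by blast
    show "0 < b" if "b \<in> be ` R" for b using that R_right by (auto simp: be_def)
  qed (meson imageI that)
  have "sole_minimizer z s"
  proof (rule sole_minimizer_if_separated[OF z s(1) extreme_lattice_pt_undominated[OF x]])
    fix w assume "w \<in> F" "snd w < snd z"
    then have "w \<in> R" by (simp add: R_def)
    then show "s * (real (snd z) - real (snd w)) < real (fst w) - real (fst z)"
      using s(3)[of w] R_right[of w] by (simp add: be_def A_def B_def less_divide_eq)
  next
    fix w assume "w \<in> F" "snd z < snd w" "fst w < fst z"
    then have "w \<in> L" by (simp add: L_def)
    then show "real (fst z) - real (fst w) < s * (real (snd w) - real (snd z))"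
      using s(2)[of w] \<open>snd z < snd w\<close> by (simp add: al_def A_def B_def divide_less_eq)
  qed
  then show ?thesis using s(1) by (auto simp: vertices_def)
qed

lemma extreme_points_polyhedron: "{x. x extreme_point_of polyhedron} = lattice_pt ` vertices"
proof
  show "{x. x extreme_point_of polyhedron} \<subseteq> lattice_pt ` vertices"
    using extreme_point_polyhedron_lattice_pt extreme_lattice_pt_vertex by blast
  show "lattice_pt ` vertices \<subseteq> {x. x extreme_point_of polyhedron}"
    using sole_minimizer_extreme_point by (auto simp: vertices_def)
qed

lemma edges_eq_consecutive:
  "edges = (\<lambda>(u, w). (lattice_pt u, lattice_pt w)) ` {(u, w). consecutive u w}"
  by (auto simp: edges_def consecutive_def lattice_pt_def image_iff)

lemma breakpoints_eq_edge_image: "{s. 0 < s \<and> breakpoint s} = (\<lambda>e. - 1 / edge_slope e) ` edges"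
proof (intro equalityI subsetI)
  fix s assume "s \<in> {s. 0 < s \<and> breakpoint s}"
  then obtain u w where uw: "consecutive u w" "s = crossing u w"
    using breakpoint_iff_consecutive_crossing by blast
  then have "(lattice_pt u, lattice_pt w) \<in> edges"
    unfolding edges_eq_consecutive by (intro image_eqI[of _ _ "(u, w)"]) simp_all
  moreover have "s = - 1 / edge_slope (lattice_pt u, lattice_pt w)"
    using uw(2) by (simp add: edge_slope_lattice_pt)
  ultimately show "s \<in> (\<lambda>e. - 1 / edge_slope e) ` edges" by (rule rev_image_eqI)
next
  fix s assume "s \<in> (\<lambda>e. - 1 / edge_slope e) ` edges"
  then obtain u w where uw: "consecutive u w" "s = - 1 / edge_slope (lattice_pt u, lattice_pt w)"
    unfolding edges_eq_consecutive by auto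
  then have "s = crossing u w" by (simp add: edge_slope_lattice_pt)
  moreover have "0 < s" using consecutive_active_at_crossing[OF uw(1)] calculation by simp
  ultimately show "s \<in> {s. 0 < s \<and> breakpoint s}"
    using uw(1) breakpoint_iff_consecutive_crossing by blast
qed

lemma inj_on_edges_breakpoint: "inj_on (\<lambda>e. - 1 / edge_slope e) edges"
proof (rule inj_onI)
  fix e e' assume e: "e \<in> edges" "e' \<in> edges" and eq: "- 1 / edge_slope e = - 1 / edge_slope e'"
  obtain u w where uw: "consecutive u w" "e = (lattice_pt u, lattice_pt w)"
    using e(1) unfolding edges_eq_consecutive by auto
  obtain u' w' where uw': "consecutive u' w'" "e' = (lattice_pt u', lattice_pt w')"
    using e(2) unfolding edges_eq_consecutive by auto
  have "crossing u w = crossing u' w'" using eq uw(2) uw'(2) by (simp add: edge_slope_lattice_pt)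
  then have "u = u' \<and> w = w'" using consecutive_crossing_inj[OF uw(1) uw'(1)] by blast
  then show "e = e'" using uw(2) uw'(2) by simp
qed

lemma finite_edges: "finite edges"
proof (rule finite_imageD[OF _ inj_on_edges_breakpoint])
  show "finite ((\<lambda>e. - 1 / edge_slope e) ` edges)"
    unfolding breakpoints_eq_edge_image[symmetric]
    by (rule finite_subset[OF _ finite_breakpoints]) auto
qed

lemma breakpoint_iff_edge: "0 < s \<Longrightarrow> breakpoint s \<longleftrightarrow> (\<exists>e\<in>edges. s = - 1 / edge_slope e)"
  using breakpoints_eq_edge_image by blast

lemma card_steep_edges:
  assumes "0 < a"
  shows "card {e \<in> edges. - 1 / a < edge_slope e} = card {s. a < s \<and> breakpoint s}"
proof -
  have steep: "- 1 / a < edge_slope e \<longleftrightarrow> a < - 1 / edge_slope e" if "e \<in> edges" for e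
  proof -
    have "0 < - 1 / edge_slope e" using that breakpoints_eq_edge_image by blast
    then have neg: "edge_slope e < 0" by (simp add: zero_less_divide_iff)
    have "- 1 / a < edge_slope e \<longleftrightarrow> - 1 < edge_slope e * a" by (rule pos_divide_less_eq[OF assms])
    moreover have "a < - 1 / edge_slope e \<longleftrightarrow> - 1 < a * edge_slope e" by (rule neg_less_divide_eq[OF neg])
    ultimately show ?thesis by (simp add: mult.commute)
  qed
  have "{s. a < s \<and> breakpoint s} = (\<lambda>e. - 1 / edge_slope e) ` {e \<in> edges. - 1 / a < edge_slope e}"
  proof (intro equalityI subsetI)
    fix s assume s: "s \<in> {s. a < s \<and> breakpoint s}"
    then have "s \<in> {s. 0 < s \<and> breakpoint s}" using assms by simp
    then obtain e where "e \<in> edges" "s = - 1 / edge_slope e"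
      unfolding breakpoints_eq_edge_image by blast
    then show "s \<in> (\<lambda>e. - 1 / edge_slope e) ` {e \<in> edges. - 1 / a < edge_slope e}"
      using steep s by (intro rev_image_eqI[of e]) simp_all
  next
    fix s assume "s \<in> (\<lambda>e. - 1 / edge_slope e) ` {e \<in> edges. - 1 / a < edge_slope e}"
    then obtain e where e: "e \<in> edges" "- 1 / a < edge_slope e" "s = - 1 / edge_slope e" by blast
    then have "s \<in> {s. 0 < s \<and> breakpoint s}" unfolding breakpoints_eq_edge_image by blast
    then show "s \<in> {s. a < s \<and> breakpoint s}" using steep e by simp
  qed
  moreover have "inj_on (\<lambda>e. - 1 / edge_slope e) {e \<in> edges. - 1 / a < edge_slope e}"
    using inj_on_edges_breakpoint by (rule inj_on_subset) auto
  ultimately show ?thesis by (simp add: card_image)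
qed

lemma Inf_weights_eq_envelope:
  assumes sub: "F \<subseteq> S" and dom: "\<And>z. z \<in> S \<Longrightarrow> \<exists>w\<in>F. fst w \<le> fst z \<and> snd w \<le> snd z"
    and "0 \<le> s"
  shows "Inf {real i + s * real j | i j. (i, j) \<in> S} = envelope s"
proof (rule cInf_eq_minimum)
  obtain z where z: "z \<in> active s" using active_nonempty by blast
  then show "envelope s \<in> {real i + s * real j | i j. (i, j) \<in> S}"
    using sub active_in_F[OF z] weight_active[OF z]
    by (intro CollectI exI[of _ "fst z"] exI[of _ "snd z"]) (auto simp: weight_def)
next
  fix y assume "y \<in> {real i + s * real j | i j. (i, j) \<in> S}"
  then obtain i j where ij: "(i, j) \<in> S" "y = real i + s * real j" by blast
  obtain w where w: "w \<in> F" "fst w \<le> i" "snd w \<le> j" using dom[OF ij(1)] by auto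
  have "envelope s \<le> weight w s" using w(1) by (rule envelope_le_weight)
  also have "\<dots> \<le> y"
    using w \<open>0 \<le> s\<close> unfolding weight_def ij(2) by (intro add_mono mult_left_mono) auto
  finally show "envelope s \<le> y" .
qed

lemma convex_hull_quadrants_eq_polyhedron:
  assumes sub: "F \<subseteq> S" and dom: "\<And>z. z \<in> S \<Longrightarrow> \<exists>w\<in>F. fst w \<le> fst z \<and> snd w \<le> snd z"
  shows "convex hull (\<Union>(i, j) \<in> S. {(real i + u, real j + v) | u v. u \<ge> 0 \<and> v \<ge> 0}) = polyhedron"
proof -
  have "(\<Union>(i, j) \<in> S. {(real i + u, real j + v) | u v. u \<ge> 0 \<and> v \<ge> 0}) = (\<Union>z\<in>S. quadrant z)"
    unfolding quadrant_def by (intro SUP_cong refl) (simp add: case_prod_beta)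
  also have "\<dots> = (\<Union>z\<in>F. quadrant z)"
  proof (intro equalityI subsetI)
    fix y assume "y \<in> (\<Union>z\<in>S. quadrant z)"
    then obtain z where "z \<in> S" "y \<in> quadrant z" by blast
    moreover obtain w where "w \<in> F" "fst w \<le> fst z" "snd w \<le> snd z" using dom[OF \<open>z \<in> S\<close>] by blast
    ultimately show "y \<in> (\<Union>z\<in>F. quadrant z)" using quadrant_mono by blast
  next
    fix y assume "y \<in> (\<Union>z\<in>F. quadrant z)"
    then show "y \<in> (\<Union>z\<in>S. quadrant z)" using sub by blast
  qed
  finally show ?thesis by (simp add: polyhedron_def)
qed

end

section \<open>The valuation \<open>v\<^sub>1\<close> along a smooth branch\<close>

lemma v1_eq_int_mult_smooth:
  assumes \<xi>0: "fps_nth \<xi> 0 = 0" and reg: "eval_O q \<noteq> 0" and p: "restrict_C \<xi> p \<noteq> 0"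
    and s: "real (int_mult_smooth \<xi> p q) \<le> s"
  shows "v1 \<xi> p q s = real (int_mult_smooth \<xi> p q)"
proof -
  define A0 where "A0 = fps_nth (C_expansion \<xi> p q) 0"
  have UA: "restrict_C \<xi> q * A0 = restrict_C \<xi> p"
    using restrict_C_mult_C_expansion_0[OF \<xi>0 reg] by (simp add: A0_def)
  have "restrict_C \<xi> q \<noteq> 0" using reg fps_nth_restrict_C_0[OF \<xi>0, of q] by auto
  then have mult: "int_mult_smooth \<xi> p q = subdegree A0"
    unfolding int_mult_smooth_def UA[symmetric] by simp
  have "A0 \<noteq> 0" using UA p by auto
  have "v1 \<xi> p q s = Inf {real i + s * real j | i j. (i, j) \<in> {(i, j). C_coeff \<xi> p q i j \<noteq> 0}}"
    by (simp add: v1_def)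
  also have "\<dots> = real (subdegree A0)"
    using \<open>A0 \<noteq> 0\<close> s unfolding mult
    by (intro Inf_weights_first_row) (auto simp: C_coeff_def A0_def[symmetric])
  finally show ?thesis by (simp add: mult)
qed

theorem proposition3p7:
  fixes \<xi> :: "complex fps" and p q :: "complex poly poly"
  assumes C: "curve_branch \<xi>"
    and reg: "eval_O q \<noteq> 0"
    and nz: "p \<noteq> 0"
  shows
    "(continuous_on {1..} (v1 \<xi> p q) \<and>
      mono_on {1..} (v1 \<xi> p q) \<and>
      concave_on {1..} (v1 \<xi> p q) \<and>
      finite (NP_edges \<xi> p q) \<and>
      (\<exists>(t :: nat \<Rightarrow> real) (\<sigma> :: nat \<Rightarrow> real) (\<beta> :: nat \<Rightarrow> real) (N :: nat).
         N = Suc (card {e \<in> NP_edges \<xi> p q. edge_slope e > -1}) \<and>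
         t 0 = 1 \<and> (\<forall>m. Suc m < N \<longrightarrow> t m < t (Suc m)) \<and>
         (\<forall>m < N. \<sigma> m \<in> \<rat> \<and>
            (\<forall>s. t m \<le> s \<and> (Suc m < N \<longrightarrow> s \<le> t (Suc m)) \<longrightarrow> v1 \<xi> p q s = \<sigma> m * s + \<beta> m)) \<and>
         (\<forall>m. Suc m < N \<longrightarrow> \<sigma> m \<noteq> \<sigma> (Suc m))))
     \<and> (\<forall>s > 1. \<not> (v1 \<xi> p q) differentiable (at s) \<longleftrightarrow>
            (\<exists>e \<in> NP_edges \<xi> p q. s = - 1 / edge_slope e))
     \<and> (restrict_C \<xi> p \<noteq> 0 \<longrightarrow>
            (\<exists>S. \<forall>s \<ge> S. v1 \<xi> p q s = real (int_mult_smooth \<xi> p q)))"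
proof -
  have \<xi>0: "fps_nth \<xi> 0 = 0" using C by (simp add: curve_branch_def)
  define S where "S = {(i, j). C_coeff \<xi> p q i j \<noteq> 0}"
  have "S \<noteq> {}"
    using C_expansion_nonzero[OF \<xi>0 reg nz] by (auto simp: S_def C_coeff_def fps_nonzero_nth)
  then obtain F where F: "finite F" "F \<noteq> {}" "F \<subseteq> S"
    and dom: "\<And>z. z \<in> S \<Longrightarrow> \<exists>w\<in>F. fst w \<le> fst z \<and> snd w \<le> snd z"
    using finite_dominating_subset[OF \<open>S \<noteq> {}\<close>] by metis
  interpret lower_envelope F using F(1,2) by unfold_locales
  have v1: "v1 \<xi> p q s = envelope s" if "1 \<le> s" for s
    using Inf_weights_eq_envelope[OF F(3) dom, of s] that by (simp add: v1_def S_def)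
  have edges: "NP_edges \<xi> p q = edges"
    using convex_hull_quadrants_eq_polyhedron[OF F(3) dom]
    by (simp add: NP_edges_def NP_vertices_def newton_polyhedron_def S_def[symmetric]
        extreme_points_polyhedron edges_def)
  have "continuous_on {1..} (v1 \<xi> p q)"
    using continuous_on_envelope by (rule continuous_on_eq) (simp add: v1)
  moreover have "mono_on {1..} (v1 \<xi> p q)"
    using mono_onD[OF mono_on_envelope] by (intro mono_onI) (simp add: v1)
  moreover have "concave_on {1..} (v1 \<xi> p q)"
    using concave_on_envelope[OF convex_real_interval(1)] by (rule concave_on_eq) (simp add: v1)
  moreover have "card {e \<in> edges. edge_slope e > -1} = card {s. 1 < s \<and> breakpoint s}"
    using card_steep_edges[of 1] by simp
  moreover have "\<forall>s>1. \<not> v1 \<xi> p q differentiable (at s) \<longleftrightarrow> (\<exists>e\<in>edges. s = - 1 / edge_slope e)"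
    using differentiable_iff_eq_envelope[OF v1] breakpoint_iff_edge by simp
  moreover have "restrict_C \<xi> p \<noteq> 0 \<longrightarrow> (\<exists>S. \<forall>s\<ge>S. v1 \<xi> p q s = real (int_mult_smooth \<xi> p q))"
    using v1_eq_int_mult_smooth[OF \<xi>0 reg] by blast
  ultimately show ?thesis
    unfolding edges using finite_edges piecewise_linear_if_eq_envelope[OF v1] by (simp only:)
qed

end
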